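(* Let $c\in\mathbb{R}^m$ and let $T_c:\mathbb{R}^m\to\mathbb{R}^m$ be the linear map which is the identity if $c=0$, and, if $c\neq0$, sends $c\mapsto\lambda(\|c\|)\,c$ and is the identity on $c^\perp$. Then $$b_\infty\, T_c\left(\frac{1}{\sqrt{2\pi}}B_m\right)\subset G(c)\subset T_c\left(\frac{1}{\sqrt{2\pi}}B_m\right),$$ where $B_m$ is the unit ball of $\mathbb{R}^m$ and $b_\infty:=\min\{\varphi_\infty(\cos t,\sin t): t\in[0,2\pi]\}\approx 0.91$.
   Context: For an integrable random vector $X\in\mathbb{R}^m$, the Vitale zonoid $\mathbb{E}\underline{X}$ is the convex body with support function $h(u)=\frac12\mathbb{E}|\langle u,X\rangle|$ (where $h_K(u)=\sup_{x\in K}\langle u,x\rangle$). For $c\in\mathbb{R}^m$, $G(c):=\mathbb{E}\underline{c+\xi}$ with $\xi\in\mathbb{R}^m$ a standard Gaussian vector. $\operatorname{erf}(t)=\frac{2}{\sqrt\pi}\int_0^te^{-s^2}ds$. The function $\lambda:\mathbb{R}\to\mathbb{R}$ is $\lambda(s)=e^{-s^2/2}+\sqrt{\pi/2}\,s\,\operatorname{erf}(s/\sqrt2)$, and $\varphi_\infty:\mathbb{R}^2\to\mathbb{R}$ is $\varphi_\infty(x,z)=|z|e^{-x^2/(\pi z^2)}+x\operatorname{erf}\left(\frac{x}{\sqrt\pi|z|}\right)$ (extended by continuity at $z=0$, where it equals $|x|$). *)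

theory Defs
  imports "HOL-Probability.Probability"
begin

definition erf :: "real \<Rightarrow> real" where
  "erf t = 2 / sqrt pi * (LBINT s=0..t. exp (- (s\<^sup>2)))"

definition lambda_fun :: "real \<Rightarrow> real" where
  "lambda_fun s = exp (- (s\<^sup>2) / 2) + sqrt (pi / 2) * s * erf (s / sqrt 2)"

definition phi_inf :: "real \<Rightarrow> real \<Rightarrow> real" where
  "phi_inf x z = (if z = 0 then \<bar>x\<bar>
     else \<bar>z\<bar> * exp (- (x\<^sup>2) / (pi * z\<^sup>2)) + x * erf (x / (sqrt pi * \<bar>z\<bar>)))"

definition b_inf :: real where
  "b_inf = Inf ((\<lambda>t. phi_inf (cos t) (sin t)) ` {0..2*pi})"

definition std_gauss :: "'a::euclidean_space measure" where
  "std_gauss = density lborel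
     (\<lambda>x. ennreal ((2*pi) powr (- real DIM('a) / 2) * exp (- (norm x)\<^sup>2 / 2)))"

text \<open>Support function of the Vitale zonoid of c + xi: h(u) = 1/2 E|<u, c + xi>|.\<close>
definition zonoid_support :: "'a::euclidean_space \<Rightarrow> 'a \<Rightarrow> real" where
  "zonoid_support c u = (1/2) * (\<integral>\<xi>. \<bar>inner u (c + \<xi>)\<bar> \<partial>std_gauss)"

definition G :: "'a::euclidean_space \<Rightarrow> 'a set" where
  "G c = {x. \<forall>u. inner u x \<le> zonoid_support c u}"

definition T :: "'a::euclidean_space \<Rightarrow> 'a \<Rightarrow> 'a" where
  "T c x = (if c = 0 then x
     else x + ((lambda_fun (norm c) - 1) * (inner c x / (norm c)\<^sup>2)) *\<^sub>R c)"

end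

theory Submission
  imports Defs
begin

(*
  The support function of G(c) is h(u) = E |<u,c> + |u| Y| / 2 for a standard normal Y, since
  <u,xi> has the law of |u| Y (compare characteristic functions), and E |p + q Y| =
  q sqrt(2/pi) lambda(p/q) for q > 0.  As T_c is symmetric, the support function of
  T_c(B/sqrt(2 pi)) is |T_c u| / sqrt(2 pi), so both inclusions are inequalities between h(u)
  and |T_c u|.  Put r = |c|, alpha = <u,c>/r and beta^2 = |u|^2 - alpha^2; then
  |T_c u|^2 = lambda(r)^2 alpha^2 + beta^2.

  Outer inclusion: with a = alpha/|u| this amounts to lambda(r a)^2 <= a^2 lambda(r)^2 + 1 - a^2,
  which follows by differentiating in r, because lambda lambda'/s is nondecreasing.

  Inner inclusion: E |<u,c> + |u| Y| = E |alpha (r + X) + beta Y| for independent standard normal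
  X, Y.  Jensen's inequality in X for the convex even function p -> E |p + beta Y| bounds this
  below by E | |alpha| E|r + X| + beta Y | = sqrt(2/pi) phi_inf(|alpha| lambda(r), beta), and
  by homogeneity phi_inf(x, z) >= b_inf sqrt(x^2 + z^2) = b_inf |T_c u| here.
*)

section \<open>The error function and \<open>\<lambda>\<close>\<close>

lemma erf_has_real_derivative: "(erf has_real_derivative 2 / sqrt pi * exp (- (t\<^sup>2))) (at t)"
proof -
  let ?a = "- \<bar>t\<bar> - 1" and ?b = "\<bar>t\<bar> + 1"
  have "continuous_on {?a..?b} (\<lambda>s::real. exp (- (s\<^sup>2)))"
    by (intro continuous_intros)
  then have "((\<lambda>u. LBINT s=ereal 0..u. exp (- (s\<^sup>2))) has_vector_derivative exp (- (t\<^sup>2)))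
      (at t within {?a..?b})"
    by (rule interval_integral_FTC2[rotated 2]) auto
  then have "((\<lambda>u. LBINT s=0..u. exp (- (s\<^sup>2))) has_real_derivative exp (- (t\<^sup>2))) (at t)"
    by (subst (asm) at_within_interior)
       (auto simp: zero_ereal_def has_real_derivative_iff_has_vector_derivative)
  then show ?thesis
    unfolding erf_def[abs_def] by (rule DERIV_cmult)
qed

lemma erf_0 [simp]: "erf 0 = 0"
  by (simp add: erf_def zero_ereal_def)

lemma erf_minus: "erf (- t) = - erf t"
proof -
  have "((\<lambda>t. erf t + erf (- t)) has_real_derivative 0) (at x)" for x
    by (auto intro!: derivative_eq_intros erf_has_real_derivative[THEN DERIV_chain2])
  then have "erf t + erf (- t) = erf 0 + erf (- 0)"
    by (intro DERIV_isconst_all) auto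
  then show ?thesis by simp
qed

lemma erf_nonneg:
  assumes "0 \<le> t" shows "0 \<le> erf t"
proof -
  have "erf 0 \<le> erf t"
  proof (rule DERIV_nonneg_imp_nondecreasing[OF assms])
    fix x :: real
    show "\<exists>y. (erf has_real_derivative y) (at x) \<and> 0 \<le> y"
      by (intro exI[of _ "2 / sqrt pi * exp (- (x\<^sup>2))"] conjI erf_has_real_derivative) simp
  qed
  then show ?thesis by simp
qed

lemma erf_tendsto_at_top: "(erf \<longlongrightarrow> 1) at_top"
proof -
  have "has_bochner_integral lborel (\<lambda>x. indicator {0..} x *\<^sub>R exp (- x\<^sup>2)) (sqrt pi / 2)"
    by (rule gaussian_moment_0)
  then have integrable: "set_integrable lborel {0..} (\<lambda>x::real. exp (- x\<^sup>2))"
    and integral: "(LBINT x:{0..}. exp (- x\<^sup>2)) = sqrt pi / 2"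
    by (auto simp: set_integrable_def set_lebesgue_integral_def has_bochner_integral_iff)
  then have "((\<lambda>b. LBINT x:{0..b}. exp (- x\<^sup>2)) \<longlongrightarrow> sqrt pi / 2) at_top"
    using tendsto_set_lebesgue_integral_at_top[OF _ integrable] integral by simp
  then have "((\<lambda>b. 2 / sqrt pi * (LBINT x:{0..b}. exp (- x\<^sup>2))) \<longlongrightarrow> 2 / sqrt pi * (sqrt pi / 2)) at_top"
    by (intro tendsto_mult tendsto_const)
  moreover have "\<forall>\<^sub>F b in at_top. 2 / sqrt pi * (LBINT x:{0..b}. exp (- x\<^sup>2)) = erf b"
    unfolding eventually_at_top_linorder
    by (rule exI[of _ 0]) (simp add: erf_def interval_integral_Icc zero_ereal_def)
  ultimately show ?thesis
    by (simp add: Lim_transform_eventually)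
qed

lemma erf_tendsto_at_bot: "(erf \<longlongrightarrow> -1) at_bot"
proof -
  have "((\<lambda>x. erf (- x)) \<longlongrightarrow> -1) at_top"
    unfolding erf_minus by (intro tendsto_minus erf_tendsto_at_top)
  then show ?thesis
    by (simp add: filterlim_at_bot_mirror)
qed

lemma erf_div_sqrt2_has_real_derivative:
  "((\<lambda>s. erf (s / sqrt 2)) has_real_derivative 2 * std_normal_density s) (at s)"
proof -
  have "((\<lambda>s. erf (s / sqrt 2)) has_real_derivative
      2 / sqrt pi * exp (- ((s / sqrt 2)\<^sup>2)) * (1 / sqrt 2)) (at s)"
    by (rule DERIV_chain2[OF erf_has_real_derivative DERIV_cdivide[OF DERIV_ident]])
  also have "2 / sqrt pi * exp (- ((s / sqrt 2)\<^sup>2)) * (1 / sqrt 2) = 2 * std_normal_density s"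
    by (simp add: std_normal_density_def real_sqrt_mult field_simps)
  finally show ?thesis .
qed

definition lambda_deriv :: "real \<Rightarrow> real" where
  "lambda_deriv s = sqrt (pi / 2) * erf (s / sqrt 2)"

lemma lambda_fun_eq: "lambda_fun s = exp (- (s\<^sup>2) / 2) + s * lambda_deriv s"
  by (simp add: lambda_fun_def lambda_deriv_def)

lemma lambda_deriv_has_real_derivative:
  "(lambda_deriv has_real_derivative exp (- (s\<^sup>2) / 2)) (at s)"
proof -
  have "(lambda_deriv has_real_derivative sqrt (pi / 2) * (2 * std_normal_density s)) (at s)"
    unfolding lambda_deriv_def[abs_def] by (intro DERIV_cmult erf_div_sqrt2_has_real_derivative)
  also have "sqrt (pi / 2) * (2 * std_normal_density s) = exp (- (s\<^sup>2) / 2)"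
    by (simp add: std_normal_density_def real_sqrt_divide real_sqrt_mult field_simps)
  finally show ?thesis .
qed

lemma lambda_fun_has_real_derivative: "(lambda_fun has_real_derivative lambda_deriv s) (at s)"
  unfolding lambda_fun_eq[abs_def]
  by (auto intro!: derivative_eq_intros lambda_deriv_has_real_derivative)

lemma lambda_fun_0 [simp]: "lambda_fun 0 = 1"
  by (simp add: lambda_fun_def)

lemma lambda_fun_minus: "lambda_fun (- s) = lambda_fun s"
  by (simp add: lambda_fun_def erf_minus)

lemma lambda_deriv_nonneg: "0 \<le> s \<Longrightarrow> 0 \<le> lambda_deriv s"
  by (simp add: lambda_deriv_def erf_nonneg)

lemma lambda_deriv_le:
  assumes "0 \<le> s" shows "lambda_deriv s \<le> s"
proof -
  have "0 - lambda_deriv 0 \<le> s - lambda_deriv s"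
  proof (rule DERIV_nonneg_imp_nondecreasing[OF assms])
    fix x
    show "\<exists>y. ((\<lambda>s. s - lambda_deriv s) has_real_derivative y) (at x) \<and> 0 \<le> y"
      by (intro exI[of _ "1 - exp (- (x\<^sup>2) / 2)"] conjI DERIV_diff DERIV_ident
          lambda_deriv_has_real_derivative) simp
  qed
  then show ?thesis by (simp add: lambda_deriv_def)
qed

lemma one_le_lambda_fun: "1 \<le> lambda_fun s"
proof -
  have "lambda_fun 0 \<le> lambda_fun \<bar>s\<bar>"
    by (rule DERIV_nonneg_imp_nondecreasing[of 0])
       (auto intro: lambda_fun_has_real_derivative lambda_deriv_nonneg)
  then show ?thesis
    by (cases "0 \<le> s") (auto simp: lambda_fun_minus)
qed

lemma lambda_fun_mult_deriv_div_mono: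
  assumes "0 < s" "s \<le> t"
  shows "lambda_fun s * lambda_deriv s / s \<le> lambda_fun t * lambda_deriv t / t"
proof (rule DERIV_nonneg_imp_nondecreasing[OF assms(2)])
  fix x assume "s \<le> x"
  with assms have x: "0 < x" by simp
  let ?e = "exp (- (x\<^sup>2) / 2)"
  have "((\<lambda>s. lambda_fun s * lambda_deriv s / s) has_real_derivative
      ((lambda_deriv x * lambda_deriv x + lambda_fun x * ?e) * x - lambda_fun x * lambda_deriv x) / x\<^sup>2) (at x)"
    using x by (auto intro!: derivative_eq_intros lambda_fun_has_real_derivative
        lambda_deriv_has_real_derivative simp: power2_eq_square)
  moreover have "(lambda_deriv x * lambda_deriv x + lambda_fun x * ?e) * x - lambda_fun x * lambda_deriv x
      = ?e * (x * lambda_fun x - lambda_deriv x)"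
    by (simp add: lambda_fun_eq algebra_simps)
  moreover have "x * 1 \<le> x * lambda_fun x"
    using one_le_lambda_fun x by (intro mult_left_mono) auto
  then have "lambda_deriv x \<le> x * lambda_fun x"
    using lambda_deriv_le[of x] x by linarith
  ultimately show "\<exists>y. ((\<lambda>s. lambda_fun s * lambda_deriv s / s) has_real_derivative y) (at x) \<and> 0 \<le> y"
    by (intro exI conjI) auto
qed

lemma lambda_fun_mult_deriv_scale_le:
  assumes "0 \<le> a" "a \<le> 1" "0 \<le> x"
  shows "lambda_fun (x * a) * lambda_deriv (x * a) \<le> a * (lambda_fun x * lambda_deriv x)"
proof (cases "x * a = 0")
  case True
  then have "lambda_deriv (x * a) = 0"
    by (auto simp: lambda_deriv_def)
  then show ?thesis
    using assms one_le_lambda_fun[of x] lambda_deriv_nonneg[of x] by simp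
next
  case False
  with assms have "0 < x * a" "x * a \<le> x"
    by (auto simp: zero_less_mult_iff mult_left_le)
  then have "lambda_fun (x * a) * lambda_deriv (x * a) / (x * a) \<le> lambda_fun x * lambda_deriv x / x"
    by (rule lambda_fun_mult_deriv_div_mono)
  with \<open>0 < x * a\<close> show ?thesis
    by (simp add: divide_le_eq field_simps split: if_splits)
qed

lemma lambda_fun_scale_sq_le:
  assumes "0 \<le> r" "\<bar>a\<bar> \<le> 1"
  shows "(lambda_fun (r * a))\<^sup>2 \<le> a\<^sup>2 * (lambda_fun r)\<^sup>2 + 1 - a\<^sup>2"
proof -
  define D where "D s = a\<^sup>2 * (lambda_fun s)\<^sup>2 + 1 - a\<^sup>2 - (lambda_fun (s * \<bar>a\<bar>))\<^sup>2" for s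
  have "D 0 \<le> D r"
  proof (rule DERIV_nonneg_imp_nondecreasing[OF assms(1)])
    fix x :: real assume "0 \<le> x"
    have "(D has_real_derivative 2 * \<bar>a\<bar> * (\<bar>a\<bar> * (lambda_fun x * lambda_deriv x)
        - lambda_fun (x * \<bar>a\<bar>) * lambda_deriv (x * \<bar>a\<bar>))) (at x)"
      unfolding D_def[abs_def]
      by (auto intro!: derivative_eq_intros lambda_fun_has_real_derivative
          lambda_fun_has_real_derivative[THEN DERIV_chain2] simp: power2_eq_square algebra_simps)
    moreover have "0 \<le> \<bar>a\<bar> * (lambda_fun x * lambda_deriv x) - lambda_fun (x * \<bar>a\<bar>) * lambda_deriv (x * \<bar>a\<bar>)"
      using lambda_fun_mult_deriv_scale_le[of "\<bar>a\<bar>" x] assms \<open>0 \<le> x\<close> by simp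
    ultimately show "\<exists>y. (D has_real_derivative y) (at x) \<and> 0 \<le> y"
      by (intro exI conjI) auto
  qed
  moreover have "lambda_fun (r * a) = lambda_fun (r * \<bar>a\<bar>)"
    by (cases "0 \<le> a") (auto simp: lambda_fun_minus)
  ultimately show ?thesis by (simp add: D_def)
qed

section \<open>Mean absolute values of normal variables\<close>

lemma prob_space_std_normal_distribution: "prob_space std_normal_distribution"
  by (rule prob_space_normal_density) simp

lemma std_normal_density_has_real_derivative:
  "(std_normal_density has_real_derivative - y * std_normal_density y) (at y)"
  unfolding std_normal_density_def[abs_def]
  by (auto intro!: derivative_eq_intros simp: field_simps)

lemma std_normal_density_tendsto_at_bot: "(std_normal_density \<longlongrightarrow> 0) at_bot"
proof -
  have "filterlim (\<lambda>y::real. y\<^sup>2) at_top at_bot"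
    by (rule filterlim_pow_at_bot_even) (simp_all add: filterlim_ident)
  then have "filterlim (\<lambda>y::real. y\<^sup>2 / 2) at_top at_bot"
    using filterlim_tendsto_pos_mult_at_top[OF tendsto_const[of "1 / 2"]] by simp
  then have "((\<lambda>y::real. exp (- (y\<^sup>2 / 2))) \<longlongrightarrow> 0) at_bot"
    by (intro filterlim_compose[OF exp_at_bot] filterlim_compose[OF filterlim_uminus_at_bot_at_top])
  then show ?thesis
    unfolding std_normal_density_def[abs_def] by (simp add: tendsto_divide_zero)
qed

lemma std_normal_lower_tail:
  "set_integrable lborel {..< -a} (\<lambda>y. - (a + y) * std_normal_density y)"
  "(LBINT y:{..< -a}. - (a + y) * std_normal_density y)
     = std_normal_density a - a * (1 - erf (a / sqrt 2)) / 2"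
proof -
  define F where "F y = std_normal_density y - a * (1 + erf (y / sqrt 2)) / 2" for y
  have F_deriv: "(F has_real_derivative - (a + y) * std_normal_density y) (at y)" for y
    unfolding F_def[abs_def]
    by (auto intro!: derivative_eq_intros erf_div_sqrt2_has_real_derivative
        std_normal_density_has_real_derivative simp: algebra_simps)
  have "(F \<longlongrightarrow> 0 - a * (1 + -1) / 2) at_bot"
  proof -
    have "filterlim (\<lambda>y::real. y / sqrt 2) at_bot at_bot"
      using filterlim_tendsto_pos_mult_at_bot[OF tendsto_const[of "1 / sqrt 2"] _ filterlim_ident]
      by (simp add: mult.commute)
    then have "((\<lambda>y. erf (y / sqrt 2)) \<longlongrightarrow> -1) at_bot"
      by (rule filterlim_compose[OF erf_tendsto_at_bot])
    with std_normal_density_tendsto_at_bot show ?thesis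
      unfolding F_def[abs_def] by (intro tendsto_intros) simp_all
  qed
  then have F_bot: "((F \<circ> real_of_ereal) \<longlongrightarrow> 0) (at_right (-\<infinity>))"
    by (simp add: ereal_tendsto_simps)
  have F_top: "((F \<circ> real_of_ereal) \<longlongrightarrow> F (-a)) (at_left (ereal (-a)))"
    using DERIV_isCont[OF F_deriv, of "-a"]
    by (simp add: ereal_tendsto_simps isCont_def filterlim_at_split)
  have cont: "isCont (\<lambda>y. - (a + y) * std_normal_density y) y" for y
    by (simp add: std_normal_density_def)
  have nonneg: "AE y in lborel. - \<infinity> < ereal y \<longrightarrow> ereal y < ereal (- a) \<longrightarrow> 0 \<le> - (a + y) * std_normal_density y"
    by auto
  have tail: "einterval (-\<infinity>) (ereal (-a)) = {..< -a}"
    by (auto simp: einterval_def)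
  note FTC = interval_integral_FTC_nonneg[OF _ F_deriv cont nonneg F_bot F_top]
  show "set_integrable lborel {..< -a} (\<lambda>y. - (a + y) * std_normal_density y)"
    using FTC(1) by (simp add: tail)
  show "(LBINT y:{..< -a}. - (a + y) * std_normal_density y)
     = std_normal_density a - a * (1 - erf (a / sqrt 2)) / 2"
    using FTC(2) by (simp add: tail interval_lebesgue_integral_def F_def erf_minus
        std_normal_density_def)
qed

definition mean_abs_normal :: "real \<Rightarrow> real \<Rightarrow> real" where
  "mean_abs_normal p q = (\<integral>y. \<bar>p + q * y\<bar> \<partial>std_normal_distribution)"

lemma integrable_abs_affine_std_normal:
  "integrable std_normal_distribution (\<lambda>y. \<bar>p + q * y\<bar>)"
proof (rule Bochner_Integration.integrable_bound)
  interpret prob_space std_normal_distribution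
    by (rule prob_space_std_normal_distribution)
  have "integrable std_normal_distribution (\<lambda>y. \<bar>y\<bar>)"
    using integrable_std_normal_moment_abs[of 1] by (subst integrable_density) auto
  then show "integrable std_normal_distribution (\<lambda>y. \<bar>p\<bar> + \<bar>q\<bar> * \<bar>y\<bar>)"
    by auto
  show "AE y in std_normal_distribution. norm \<bar>p + q * y\<bar> \<le> norm (\<bar>p\<bar> + \<bar>q\<bar> * \<bar>y\<bar>)"
    by (auto simp: abs_mult[symmetric] abs_triangle_ineq)
qed simp

lemma mean_abs_normal_1_right: "mean_abs_normal a 1 = sqrt (2 / pi) * lambda_fun a"
proof -
  let ?tail = "\<lambda>y. indicator {..< -a} y *\<^sub>R (- (a + y) * std_normal_density y)"
  have split: "std_normal_density y * \<bar>a + y\<bar>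
      = std_normal_density y * a + std_normal_density y * y + 2 * ?tail y" for y
    by (auto simp: algebra_simps abs_if indicator_def)
  have "integrable lborel ?tail"
    using std_normal_lower_tail(1)[of a] by (simp add: set_integrable_def)
  moreover have "integrable lborel (\<lambda>y. std_normal_density y * y)"
    using integrable_std_normal_moment[of 1] by simp
  moreover have "(\<integral>y. std_normal_density y * y \<partial>lborel) = 0"
    using integral_std_normal_moment_odd[of 0] by simp
  ultimately have "(\<integral>y. std_normal_density y * \<bar>a + y\<bar> \<partial>lborel)
      = a + 2 * (LBINT y:{..< -a}. - (a + y) * std_normal_density y)"
    unfolding split by (simp add: set_lebesgue_integral_def)
  also have "\<dots> = 2 * std_normal_density a + a * erf (a / sqrt 2)"
    unfolding std_normal_lower_tail(2) by (simp add: field_simps)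
  also have "\<dots> = sqrt (2 / pi) * lambda_fun a"
    by (simp add: lambda_fun_def std_normal_density_def real_sqrt_divide real_sqrt_mult field_simps)
  finally show ?thesis
    by (simp add: mean_abs_normal_def integral_density)
qed

lemma mean_abs_normal_scale:
  assumes "0 \<le> \<rho>"
  shows "mean_abs_normal (\<rho> * p) (\<rho> * q) = \<rho> * mean_abs_normal p q"
proof -
  have "\<bar>\<rho> * p + \<rho> * q * y\<bar> = \<rho> * \<bar>p + q * y\<bar>" for y
    using assms by (simp add: abs_mult distrib_left[symmetric] mult.assoc)
  then show ?thesis
    by (simp add: mean_abs_normal_def)
qed

lemma mean_abs_normal_0_right [simp]: "mean_abs_normal p 0 = \<bar>p\<bar>"
proof -
  have "measure std_normal_distribution UNIV = 1"
    using prob_space.prob_space[OF prob_space_std_normal_distribution] by simp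
  then show ?thesis
    by (simp add: mean_abs_normal_def)
qed

lemma mean_abs_normal_pos:
  assumes "0 < q"
  shows "mean_abs_normal p q = q * (sqrt (2 / pi) * lambda_fun (p / q))"
  using mean_abs_normal_scale[of q "p / q" 1] assms
  by (simp add: mean_abs_normal_1_right)

lemma mean_abs_normal_minus_left:
  assumes "0 \<le> q"
  shows "mean_abs_normal (- p) q = mean_abs_normal p q"
  using assms by (cases "q = 0") (simp_all add: mean_abs_normal_pos lambda_fun_minus)

lemma mean_abs_normal_abs_left:
  assumes "0 \<le> q"
  shows "mean_abs_normal \<bar>p\<bar> q = mean_abs_normal p q"
  using mean_abs_normal_minus_left[OF assms, of p] by (cases "0 \<le> p") simp_all

lemma convex_on_mean_abs_normal: "convex_on UNIV (\<lambda>p. mean_abs_normal p q)"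
proof (rule convex_onI)
  fix t x y :: real assume t: "0 < t" "t < 1"
  have "\<bar>(1 - t) * x + t * y + q * z\<bar> \<le> (1 - t) * \<bar>x + q * z\<bar> + t * \<bar>y + q * z\<bar>" for z
  proof -
    have "\<bar>(1 - t) * x + t * y + q * z\<bar> = \<bar>(1 - t) * (x + q * z) + t * (y + q * z)\<bar>"
      by (simp add: algebra_simps)
    also have "\<dots> \<le> \<bar>(1 - t) * (x + q * z)\<bar> + \<bar>t * (y + q * z)\<bar>"
      by (rule abs_triangle_ineq)
    also have "\<dots> = (1 - t) * \<bar>x + q * z\<bar> + t * \<bar>y + q * z\<bar>"
      using t by (simp add: abs_mult)
    finally show ?thesis .
  qed
  then have "mean_abs_normal ((1 - t) * x + t * y) q
      \<le> (\<integral>z. (1 - t) * \<bar>x + q * z\<bar> + t * \<bar>y + q * z\<bar> \<partial>std_normal_distribution)"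
    unfolding mean_abs_normal_def
    by (intro integral_mono integrable_abs_affine_std_normal Bochner_Integration.integrable_add
        integrable_mult_right)
  then show "mean_abs_normal ((1 - t) *\<^sub>R x + t *\<^sub>R y) q
      \<le> (1 - t) * mean_abs_normal x q + t * mean_abs_normal y q"
    by (simp add: mean_abs_normal_def integrable_abs_affine_std_normal)
qed simp

lemma mean_abs_normal_eq_phi_inf:
  assumes "0 \<le> q"
  shows "mean_abs_normal p q = sqrt (2 / pi) * phi_inf (sqrt (pi / 2) * p) q"
proof (cases "q = 0")
  case True
  then show ?thesis
    by (simp add: phi_inf_def abs_mult real_sqrt_divide)
next
  case False
  with assms have q: "0 < q" by simp
  have exp_arg: "- ((sqrt (pi / 2) * p)\<^sup>2) / (pi * q\<^sup>2) = - ((p / q)\<^sup>2) / 2"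
    using q by (simp add: power_mult_distrib power_divide)
  have erf_arg: "sqrt (pi / 2) * p / (sqrt pi * \<bar>q\<bar>) = p / q / sqrt 2"
    using q by (simp add: real_sqrt_divide)
  have "phi_inf (sqrt (pi / 2) * p) q
      = q * exp (- ((p / q)\<^sup>2) / 2) + sqrt (pi / 2) * p * erf (p / q / sqrt 2)"
    using q unfolding phi_inf_def exp_arg erf_arg by simp
  also have "\<dots> = q * lambda_fun (p / q)"
    using q by (simp add: lambda_fun_def algebra_simps)
  finally show ?thesis
    using q by (simp add: mean_abs_normal_pos)
qed

lemma mult_erf_div_nonneg:
  assumes "0 \<le> c"
  shows "0 \<le> x * erf (x / c)"
proof (cases "0 \<le> x")
  case True
  with assms show ?thesis by (simp add: erf_nonneg)
next
  case False
  with assms have "0 \<le> erf (- x / c)"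
    by (intro erf_nonneg) (simp add: divide_nonpos_nonneg)
  with False show ?thesis
    by (simp add: erf_minus mult_nonpos_nonpos)
qed

lemma phi_inf_nonneg: "0 \<le> phi_inf x z"
  by (simp add: phi_inf_def mult_erf_div_nonneg)

lemma phi_inf_scale:
  assumes "0 < \<rho>"
  shows "phi_inf (\<rho> * x) (\<rho> * z) = \<rho> * phi_inf x z"
proof -
  have "(\<rho> * x)\<^sup>2 / (pi * (\<rho> * z)\<^sup>2) = x\<^sup>2 / (pi * z\<^sup>2)"
    using assms by (simp add: power_mult_distrib)
  moreover have "\<rho> * x / (sqrt pi * \<bar>\<rho> * z\<bar>) = x / (sqrt pi * \<bar>z\<bar>)"
    using assms by (simp add: abs_mult)
  ultimately show ?thesis
    using assms by (simp add: phi_inf_def abs_mult algebra_simps)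
qed

lemma b_inf_nonneg: "0 \<le> b_inf"
  unfolding b_inf_def by (rule cInf_greatest) (auto simp: phi_inf_nonneg)

lemma b_inf_mult_le_phi_inf: "b_inf * sqrt (x\<^sup>2 + z\<^sup>2) \<le> phi_inf x z"
proof (cases "x = 0 \<and> z = 0")
  case True
  then show ?thesis by (simp add: phi_inf_nonneg)
next
  case False
  define \<rho> where "\<rho> = sqrt (x\<^sup>2 + z\<^sup>2)"
  have pos: "0 < x\<^sup>2 + z\<^sup>2"
    using False sum_power2_gt_zero_iff by blast
  then have \<rho>: "0 < \<rho>"
    by (simp add: \<rho>_def)
  have "(x / \<rho>)\<^sup>2 + (z / \<rho>)\<^sup>2 = 1"
    using False pos by (simp add: \<rho>_def power_divide add_divide_distrib[symmetric])
  then obtain t where t: "0 \<le> t" "t < 2 * pi" "x / \<rho> = cos t" "z / \<rho> = sin t"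
    by (rule sincos_total_2pi)
  have "b_inf \<le> phi_inf (cos t) (sin t)"
    unfolding b_inf_def
    by (rule cInf_lower) (use t in \<open>auto intro!: bdd_belowI[of _ 0] simp: phi_inf_nonneg\<close>)
  moreover have "x = \<rho> * cos t" "z = \<rho> * sin t"
    using t \<rho> by (simp_all add: field_simps)
  then have "phi_inf x z = \<rho> * phi_inf (cos t) (sin t)"
    using phi_inf_scale[OF \<rho>] by simp
  ultimately show ?thesis
    using \<rho> by (simp add: \<rho>_def[symmetric] mult.commute)
qed

section \<open>Linear projections of the standard Gaussian\<close>

lemma power2_norm_eq_sum_Basis: "(norm x)\<^sup>2 = (\<Sum>b\<in>Basis. (x \<bullet> b)\<^sup>2)"
  unfolding power2_norm_eq_inner euclidean_inner[of x x] by (simp add: power2_eq_square)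

lemma std_gauss_eq_density_prod:
  "(std_gauss :: 'a::euclidean_space measure)
     = density lborel (\<lambda>x. ennreal (\<Prod>b\<in>Basis. std_normal_density (x \<bullet> b)))"
proof -
  have "(2*pi) powr (- real DIM('a) / 2) = inverse (((2*pi) powr (1/2)) powr real DIM('a))"
    by (simp add: powr_powr powr_minus[symmetric])
  also have "\<dots> = (1 / sqrt (2*pi)) ^ DIM('a)"
    by (simp add: powr_half_sqrt powr_realpow power_one_over inverse_eq_divide)
  finally have const: "(2*pi) powr (- real DIM('a) / 2) = (\<Prod>b\<in>(Basis::'a set). 1 / sqrt (2*pi))"
    by simp
  have "exp (- (norm x)\<^sup>2 / 2) = (\<Prod>b\<in>(Basis::'a set). exp (- (x \<bullet> b)\<^sup>2 / 2))" for x :: 'a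
    by (simp add: power2_norm_eq_sum_Basis exp_sum[symmetric] sum_negf sum_divide_distrib)
  then have "(2*pi) powr (- real DIM('a) / 2) * exp (- (norm x)\<^sup>2 / 2)
      = (\<Prod>b\<in>Basis. std_normal_density (x \<bullet> b))" for x :: 'a
    unfolding const std_normal_density_def prod.distrib by simp
  then show ?thesis
    by (simp add: std_gauss_def)
qed

lemma prob_space_std_gauss: "prob_space (std_gauss :: 'a::euclidean_space measure)"
proof
  have "emeasure (std_gauss :: 'a measure) (space std_gauss)
      = (\<integral>\<^sup>+x. (\<Prod>b\<in>Basis. ennreal (std_normal_density (x \<bullet> b))) \<partial>(lborel :: 'a measure))"
    by (simp add: std_gauss_eq_density_prod emeasure_density prod_ennreal)
  also have "\<dots> = (\<Prod>b\<in>(Basis::'a set). (\<integral>\<^sup>+x. ennreal (std_normal_density x) \<partial>lborel))"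
    by (rule nn_integral_lborel_prod) auto
  also have "\<dots> = 1"
    by (simp add: nn_integral_eq_integral)
  finally show "emeasure (std_gauss :: 'a measure) (space std_gauss) = 1" .
qed

lemma integral_lborel_prod:
  fixes f :: "'a::euclidean_space \<Rightarrow> real \<Rightarrow> 'b::{real_normed_field, banach, second_countable_topology}"
  assumes int: "\<And>b. b \<in> Basis \<Longrightarrow> integrable lborel (f b)"
  shows "(\<integral>x. (\<Prod>b\<in>Basis. f b (x \<bullet> b)) \<partial>(lborel :: 'a measure)) = (\<Prod>b\<in>Basis. \<integral>x. f b x \<partial>lborel)"
proof -
  interpret P: product_sigma_finite "\<lambda>_::'a. lborel :: real measure" ..
  have [measurable]: "\<And>b. b \<in> Basis \<Longrightarrow> f b \<in> borel_measurable lborel"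
    using int by (auto dest: borel_measurable_integrable)
  have "(\<lambda>x. \<Prod>b\<in>Basis. f b (x \<bullet> b)) \<in> borel_measurable (borel :: 'a measure)"
    by (intro borel_measurable_prod)
       (auto intro: measurable_compose[OF borel_measurable_inner[OF measurable_id measurable_const]])
  then have "(\<integral>x. (\<Prod>b\<in>Basis. f b (x \<bullet> b)) \<partial>(lborel :: 'a measure))
      = (\<integral>g. (\<Prod>b\<in>Basis. f b ((\<Sum>b'\<in>Basis. g b' *\<^sub>R b') \<bullet> b)) \<partial>(\<Pi>\<^sub>M b\<in>(Basis::'a set). lborel))"
    by (subst lborel_eq) (rule integral_distr, measurable)
  also have "\<dots> = (\<integral>g. (\<Prod>b\<in>Basis. f b (g b)) \<partial>(\<Pi>\<^sub>M b\<in>(Basis::'a set). lborel))"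
    by (intro Bochner_Integration.integral_cong prod.cong refl) simp
  also have "\<dots> = (\<Prod>b\<in>Basis. \<integral>x. f b x \<partial>lborel)"
    by (rule P.product_integral_prod) (auto intro: int)
  finally show ?thesis .
qed

lemma integral_std_normal_density_iexp:
  "(CLINT x|lborel. std_normal_density x *\<^sub>R iexp (s * x)) = complex_of_real (exp (- (s\<^sup>2) / 2))"
proof -
  have "(CLINT x|lborel. std_normal_density x *\<^sub>R iexp (s * x)) = char std_normal_distribution s"
    unfolding char_def by (simp add: integral_density)
  then show ?thesis
    by (simp add: char_std_normal_distribution)
qed

lemma integrable_std_normal_density_iexp:
  "complex_integrable lborel (\<lambda>x. std_normal_density x *\<^sub>R iexp (s * x))"
proof -
  interpret prob_space std_normal_distribution
    by (rule prob_space_std_normal_distribution)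
  have "complex_integrable std_normal_distribution (\<lambda>x. iexp (s * x))"
    by (rule integrable_iexp) auto
  then show ?thesis
    by (subst (asm) integrable_density) auto
qed

lemma char_distr_std_gauss_inner:
  "char (distr (std_gauss :: 'a::euclidean_space measure) borel (inner u)) t
     = complex_of_real (exp (- (norm u * t)\<^sup>2 / 2))"
proof -
  have iexp_prod: "iexp (t * (u \<bullet> \<xi>)) = (\<Prod>b\<in>Basis. iexp ((t * (u \<bullet> b)) * (\<xi> \<bullet> b)))" for \<xi> :: 'a
    by (simp add: euclidean_inner[of u \<xi>] sum_distrib_left exp_sum[symmetric] mult_ac)
  have "char (distr (std_gauss :: 'a measure) borel (inner u)) t
      = (CLINT \<xi>|(std_gauss :: 'a measure). iexp (t * (u \<bullet> \<xi>)))"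
    unfolding char_def by (subst integral_distr) (auto simp: std_gauss_def)
  also have "\<dots> = (CLINT \<xi>|(lborel :: 'a measure).
      (\<Prod>b\<in>Basis. std_normal_density (\<xi> \<bullet> b)) *\<^sub>R iexp (t * (u \<bullet> \<xi>)))"
    unfolding std_gauss_eq_density_prod by (subst integral_density) (auto simp: prod_nonneg)
  also have "\<dots> = (CLINT \<xi>|(lborel :: 'a measure).
      (\<Prod>b\<in>Basis. std_normal_density (\<xi> \<bullet> b) *\<^sub>R iexp ((t * (u \<bullet> b)) * (\<xi> \<bullet> b))))"
    unfolding iexp_prod by (simp add: scaleR_conv_of_real prod.distrib)
  also have "\<dots> = (\<Prod>b\<in>(Basis::'a set). CLINT x|lborel. std_normal_density x *\<^sub>R iexp ((t * (u \<bullet> b)) * x))"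
    by (rule integral_lborel_prod[OF integrable_std_normal_density_iexp])
  also have "\<dots> = (\<Prod>b\<in>(Basis::'a set). complex_of_real (exp (- ((t * (u \<bullet> b))\<^sup>2) / 2)))"
    by (simp only: integral_std_normal_density_iexp)
  also have "\<dots> = complex_of_real (exp (\<Sum>b\<in>(Basis::'a set). - ((t * (u \<bullet> b))\<^sup>2) / 2))"
    by (simp add: exp_sum)
  also have "(\<Sum>b\<in>(Basis::'a set). - ((t * (u \<bullet> b))\<^sup>2) / 2) = - (norm u * t)\<^sup>2 / 2"
    by (simp add: power2_norm_eq_sum_Basis power_mult_distrib sum_divide_distrib[symmetric]
        sum_negf sum_distrib_left[symmetric])
  finally show ?thesis .
qed

lemma distr_std_gauss_inner:
  "distr (std_gauss :: 'a::euclidean_space measure) borel (inner u)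
     = distr std_normal_distribution borel (\<lambda>y. norm u * y)"
proof (rule Levy_uniqueness)
  interpret G: prob_space "std_gauss :: 'a measure"
    by (rule prob_space_std_gauss)
  interpret N: prob_space std_normal_distribution
    by (rule prob_space_std_normal_distribution)
  show "real_distribution (distr (std_gauss :: 'a measure) borel (inner u))"
    by (rule G.real_distribution_distr) (simp add: std_gauss_def)
  show "real_distribution (distr std_normal_distribution borel (\<lambda>y. norm u * y))"
    by (rule N.real_distribution_distr) simp
  have "char (distr std_normal_distribution borel (\<lambda>y. norm u * y)) t
      = char std_normal_distribution (t * norm u)" for t
    unfolding char_def by (subst integral_distr) (auto simp: mult_ac)
  then show "char (distr (std_gauss :: 'a measure) borel (inner u))
      = char (distr std_normal_distribution borel (\<lambda>y. norm u * y))"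
    by (simp add: fun_eq_iff char_distr_std_gauss_inner char_std_normal_distribution mult_ac)
qed

lemma
  fixes f :: "real \<Rightarrow> real" and u :: "'a::euclidean_space"
  assumes [measurable]: "f \<in> borel_measurable borel"
  shows integral_std_gauss_inner:
      "(\<integral>\<xi>. f (u \<bullet> \<xi>) \<partial>(std_gauss :: 'a measure)) = (\<integral>y. f (norm u * y) \<partial>std_normal_distribution)"
    and integrable_std_gauss_inner:
      "integrable (std_gauss :: 'a measure) (\<lambda>\<xi>. f (u \<bullet> \<xi>))
         \<longleftrightarrow> integrable std_normal_distribution (\<lambda>y. f (norm u * y))"
proof -
  have [measurable]: "inner u \<in> borel_measurable (std_gauss :: 'a measure)"
    by (simp add: std_gauss_def)
  show "(\<integral>\<xi>. f (u \<bullet> \<xi>) \<partial>(std_gauss :: 'a measure)) = (\<integral>y. f (norm u * y) \<partial>std_normal_distribution)"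
    using integral_distr[of "inner u" "std_gauss :: 'a measure" borel f]
      integral_distr[of "\<lambda>y. norm u * y" std_normal_distribution borel f]
    by (simp add: distr_std_gauss_inner)
  show "integrable (std_gauss :: 'a measure) (\<lambda>\<xi>. f (u \<bullet> \<xi>))
      \<longleftrightarrow> integrable std_normal_distribution (\<lambda>y. f (norm u * y))"
    using integrable_distr_eq[of "inner u" "std_gauss :: 'a measure" borel f]
      integrable_distr_eq[of "\<lambda>y. norm u * y" std_normal_distribution borel f]
    by (simp add: distr_std_gauss_inner)
qed

lemma zonoid_support_eq_mean_abs_normal:
  "zonoid_support c u = mean_abs_normal (u \<bullet> c) (norm u) / 2"
  using integral_std_gauss_inner[of "\<lambda>s. \<bar>u \<bullet> c + s\<bar>" u]
  by (simp add: zonoid_support_def mean_abs_normal_def inner_add_right)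

lemma std_gauss_real_pair:
  "(std_gauss :: (real \<times> real) measure) = std_normal_distribution \<Otimes>\<^sub>M std_normal_distribution"
proof -
  interpret N: prob_space std_normal_distribution
    by (rule prob_space_std_normal_distribution)
  have "std_normal_distribution \<Otimes>\<^sub>M std_normal_distribution
      = density (lborel \<Otimes>\<^sub>M lborel) (\<lambda>(x, y). ennreal (std_normal_density x) * ennreal (std_normal_density y))"
    by (rule pair_measure_density) (auto intro: N.sigma_finite_measure_axioms sigma_finite_lborel)
  also have "(\<lambda>(x, y). ennreal (std_normal_density x) * ennreal (std_normal_density y))
      = (\<lambda>z::real \<times> real. ennreal (\<Prod>b\<in>Basis. std_normal_density (z \<bullet> b)))"
    by (auto simp: fun_eq_iff Basis_prod_def ennreal_mult intro: mult.commute)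
  finally show ?thesis
    by (simp add: lborel_prod std_gauss_eq_density_prod)
qed

lemma
  fixes p \<alpha> \<beta> :: real
  shows integrable_mean_abs_normal_affine:
      "integrable std_normal_distribution (\<lambda>x. mean_abs_normal (p + \<alpha> * x) \<beta>)"
    and integral_mean_abs_normal_affine:
      "(\<integral>x. mean_abs_normal (p + \<alpha> * x) \<beta> \<partial>std_normal_distribution)
         = mean_abs_normal p (sqrt (\<alpha>\<^sup>2 + \<beta>\<^sup>2))"
proof -
  interpret N: prob_space std_normal_distribution
    by (rule prob_space_std_normal_distribution)
  interpret P: pair_sigma_finite std_normal_distribution std_normal_distribution ..
  let ?g = "\<lambda>\<xi>::real \<times> real. \<bar>p + (\<alpha>, \<beta>) \<bullet> \<xi>\<bar>"
  have "norm (\<alpha>, \<beta>) = sqrt (\<alpha>\<^sup>2 + \<beta>\<^sup>2)"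
    by (simp add: norm_Pair)
  then have "integrable (std_gauss :: (real \<times> real) measure) ?g"
    and "(\<integral>\<xi>. ?g \<xi> \<partial>(std_gauss :: (real \<times> real) measure)) = mean_abs_normal p (sqrt (\<alpha>\<^sup>2 + \<beta>\<^sup>2))"
    using integrable_std_gauss_inner[of "\<lambda>s. \<bar>p + s\<bar>" "(\<alpha>, \<beta>)"]
      integral_std_gauss_inner[of "\<lambda>s. \<bar>p + s\<bar>" "(\<alpha>, \<beta>)"]
    by (simp_all add: integrable_abs_affine_std_normal mean_abs_normal_def)
  then have int: "integrable (std_normal_distribution \<Otimes>\<^sub>M std_normal_distribution) ?g"
    and val: "(\<integral>\<xi>. ?g \<xi> \<partial>(std_normal_distribution \<Otimes>\<^sub>M std_normal_distribution))
      = mean_abs_normal p (sqrt (\<alpha>\<^sup>2 + \<beta>\<^sup>2))"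
    by (simp_all add: std_gauss_real_pair)
  have inner: "(\<integral>y. ?g (x, y) \<partial>std_normal_distribution) = mean_abs_normal (p + \<alpha> * x) \<beta>" for x
    by (simp add: mean_abs_normal_def add.assoc)
  show "integrable std_normal_distribution (\<lambda>x. mean_abs_normal (p + \<alpha> * x) \<beta>)"
    using P.integrable_fst'[OF int] by (simp only: inner)
  show "(\<integral>x. mean_abs_normal (p + \<alpha> * x) \<beta> \<partial>std_normal_distribution)
      = mean_abs_normal p (sqrt (\<alpha>\<^sup>2 + \<beta>\<^sup>2))"
    using P.integral_fst'[OF int] val by (simp only: inner)
qed

lemma jensen_mean_abs_normal:
  assumes "0 \<le> \<beta>"
  shows "mean_abs_normal (\<bar>\<alpha>\<bar> * mean_abs_normal r 1) \<beta> \<le> mean_abs_normal (\<alpha> * r) (sqrt (\<alpha>\<^sup>2 + \<beta>\<^sup>2))"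
proof -
  interpret N: prob_space std_normal_distribution
    by (rule prob_space_std_normal_distribution)
  define X where "X = (\<lambda>x. \<bar>\<alpha>\<bar> * \<bar>r + x\<bar>)"
  have integrable_X: "integrable std_normal_distribution X"
    unfolding X_def using integrable_abs_affine_std_normal[of r 1] by simp
  have expectation_X: "N.expectation X = \<bar>\<alpha>\<bar> * mean_abs_normal r 1"
    by (simp add: X_def mean_abs_normal_def)
  have mean_X: "mean_abs_normal (X x) \<beta> = mean_abs_normal (\<alpha> * r + \<alpha> * x) \<beta>" for x
    using mean_abs_normal_abs_left[OF assms, of "\<alpha> * (r + x)"]
    by (simp add: X_def abs_mult) (simp add: distrib_left)
  have "mean_abs_normal (N.expectation X) \<beta> \<le> N.expectation (\<lambda>x. mean_abs_normal (X x) \<beta>)"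
    by (rule N.jensens_inequality[OF integrable_X _ _ _ convex_on_mean_abs_normal])
       (simp_all add: mean_X integrable_mean_abs_normal_affine)
  also have "\<dots> = mean_abs_normal (\<alpha> * r) (sqrt (\<alpha>\<^sup>2 + \<beta>\<^sup>2))"
    unfolding mean_X by (rule integral_mean_abs_normal_affine)
  finally show ?thesis
    by (simp only: expectation_X)
qed

section \<open>The linear map \<open>T c\<close>\<close>

lemma power2_norm_add_scaleR:
  fixes u c :: "'a::real_inner"
  shows "(norm (u + m *\<^sub>R c))\<^sup>2 = (norm u)\<^sup>2 + 2 * m * (u \<bullet> c) + m\<^sup>2 * (norm c)\<^sup>2"
  unfolding power2_norm_eq_inner
  by (simp add: inner_commute[of c u] power2_eq_square algebra_simps)

lemma abs_inner_div_norm_le: "\<bar>u \<bullet> c\<bar> / norm c \<le> norm u"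
  by (cases "c = 0") (simp_all add: divide_le_eq Cauchy_Schwarz_ineq2)

lemma inner_eq_mult_norm: "u \<bullet> c = (u \<bullet> c / norm c) * norm c"
  by (cases "c = 0") simp_all

(* Since x / 0 = 0 in HOL, this formula and the ones below also cover c = 0, where T c is the
   identity; no case distinction on c is needed later. *)
lemma T_eq: "T c x = x + ((lambda_fun (norm c) - 1) / (norm c)\<^sup>2 * (c \<bullet> x)) *\<^sub>R c"
  by (simp add: T_def)

lemma linear_T: "linear (T c)"
proof -
  define k where "k = (lambda_fun (norm c) - 1) / (norm c)\<^sup>2"
  have "T c = (\<lambda>x. x + (k * (c \<bullet> x)) *\<^sub>R c)"
    by (simp add: fun_eq_iff T_eq k_def)
  then show ?thesis
    by (auto intro!: linearI simp: inner_add_right distrib_left scaleR_add_left scaleR_add_right)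
qed

lemma inner_T_commute: "u \<bullet> T c v = T c u \<bullet> v"
  by (simp add: T_eq inner_add_left inner_add_right inner_commute)

lemma power2_norm_T:
  "(norm (T c u))\<^sup>2 = (norm u)\<^sup>2 + ((lambda_fun (norm c))\<^sup>2 - 1) * (u \<bullet> c / norm c)\<^sup>2"
proof (cases "c = 0")
  case False
  then show ?thesis
    unfolding T_eq power2_norm_add_scaleR
    by (simp add: inner_commute[of c u] power2_eq_square field_simps)
qed (simp add: T_def)

lemma norm_le_norm_T: "norm u \<le> norm (T c u)"
proof (rule power2_le_imp_le)
  have "0 \<le> ((lambda_fun (norm c))\<^sup>2 - 1) * (u \<bullet> c / norm c)\<^sup>2"
    using one_le_lambda_fun[of "norm c"] by simp
  then show "(norm u)\<^sup>2 \<le> (norm (T c u))\<^sup>2"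
    unfolding power2_norm_T by linarith
qed simp

lemma surj_T: "surj (T c)"
proof (rule linear_injective_imp_surjective[OF linear_T])
  have "x = 0" if "T c x = 0" for x
    using norm_le_norm_T[of x c] that by simp
  then show "inj (T c)"
    by (simp add: linear_inj_iff_eq_0[OF linear_T])
qed simp

section \<open>Bounds on the support function\<close>

lemma mean_abs_normal_le_norm_T:
  "mean_abs_normal (u \<bullet> c) (norm u) \<le> sqrt (2 / pi) * norm (T c u)"
proof (cases "u = 0")
  case True
  then show ?thesis by simp
next
  case False
  define r where "r = norm c"
  define a where "a = (u \<bullet> c / norm c) / norm u"
  have u: "0 < norm u"
    using False by simp
  have "\<bar>a\<bar> \<le> 1"
    unfolding a_def abs_divide abs_norm_cancel
    using abs_inner_div_norm_le[of u c] by (simp only: divide_le_eq_1_pos[OF u])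
  then have "(lambda_fun (r * a))\<^sup>2 \<le> a\<^sup>2 * (lambda_fun r)\<^sup>2 + 1 - a\<^sup>2"
    by (intro lambda_fun_scale_sq_le) (simp_all add: r_def)
  also have "\<dots> = (norm (T c u) / norm u)\<^sup>2"
    using u by (simp add: power2_norm_T a_def r_def field_simps)
      (simp add: diff_divide_distrib)
  finally have "lambda_fun (r * a) \<le> norm (T c u) / norm u"
    by (rule power2_le_imp_le) simp
  moreover have "mean_abs_normal (u \<bullet> c) (norm u) = norm u * (sqrt (2 / pi) * lambda_fun (r * a))"
    using u inner_eq_mult_norm[of u c] by (simp add: mean_abs_normal_pos a_def r_def mult.commute)
  ultimately show ?thesis
    using u by (simp add: field_simps)
qed

lemma b_inf_mult_norm_T_le_mean_abs_normal:
  "sqrt (2 / pi) * (b_inf * norm (T c u)) \<le> mean_abs_normal (u \<bullet> c) (norm u)"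
proof -
  define r where "r = norm c"
  define \<alpha> where "\<alpha> = u \<bullet> c / norm c"
  define \<beta> where "\<beta> = sqrt ((norm u)\<^sup>2 - \<alpha>\<^sup>2)"
  have \<alpha>_le: "\<alpha>\<^sup>2 \<le> (norm u)\<^sup>2"
    using abs_inner_div_norm_le[of u c] by (simp add: \<alpha>_def abs_le_square_iff[symmetric])
  then have "(norm u)\<^sup>2 = \<alpha>\<^sup>2 + \<beta>\<^sup>2"
    and "(norm (T c u))\<^sup>2 = (\<bar>\<alpha>\<bar> * lambda_fun r)\<^sup>2 + \<beta>\<^sup>2"
    by (simp_all add: \<beta>_def power2_norm_T \<alpha>_def r_def power_divide algebra_simps
        diff_divide_distrib)
  then have norm_u: "norm u = sqrt (\<alpha>\<^sup>2 + \<beta>\<^sup>2)"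
    and norm_Tu: "norm (T c u) = sqrt ((\<bar>\<alpha>\<bar> * lambda_fun r)\<^sup>2 + \<beta>\<^sup>2)"
    by (metis abs_norm_cancel real_sqrt_abs)+
  have \<alpha>_r: "\<alpha> * r = u \<bullet> c"
    unfolding \<alpha>_def r_def by (rule inner_eq_mult_norm[symmetric])
  have "0 \<le> \<beta>"
    using \<alpha>_le by (simp add: \<beta>_def)
  have "sqrt (2 / pi) * (b_inf * norm (T c u)) \<le> sqrt (2 / pi) * phi_inf (\<bar>\<alpha>\<bar> * lambda_fun r) \<beta>"
    unfolding norm_Tu by (intro mult_left_mono b_inf_mult_le_phi_inf) simp
  also have "\<dots> = mean_abs_normal (\<bar>\<alpha>\<bar> * mean_abs_normal r 1) \<beta>"
  proof -
    have "sqrt (pi / 2) * (\<bar>\<alpha>\<bar> * mean_abs_normal r 1) = \<bar>\<alpha>\<bar> * lambda_fun r"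
      by (simp add: mean_abs_normal_1_right real_sqrt_mult[symmetric]
          mult.left_commute[of "sqrt (pi / 2)"] mult.assoc[symmetric])
    then show ?thesis
      by (simp only: mean_abs_normal_eq_phi_inf[OF \<open>0 \<le> \<beta>\<close>])
  qed
  also have "\<dots> \<le> mean_abs_normal (\<alpha> * r) (sqrt (\<alpha>\<^sup>2 + \<beta>\<^sup>2))"
    using \<open>0 \<le> \<beta>\<close> by (rule jensen_mean_abs_normal)
  also have "\<dots> = mean_abs_normal (u \<bullet> c) (norm u)"
    unfolding norm_u[symmetric] \<alpha>_r ..
  finally show ?thesis .
qed

lemma sqrt_2_div_pi_div_2_mult: "sqrt (2 / pi) / 2 * x = x / sqrt (2 * pi)"
  by (simp add: real_sqrt_divide real_sqrt_mult field_simps)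

lemma zonoid_support_le_norm_T: "zonoid_support c u \<le> norm (T c u) / sqrt (2 * pi)"
proof -
  have "zonoid_support c u \<le> sqrt (2 / pi) / 2 * norm (T c u)"
    using mean_abs_normal_le_norm_T[of u c] by (simp add: zonoid_support_eq_mean_abs_normal)
  then show ?thesis
    by (simp only: sqrt_2_div_pi_div_2_mult)
qed

lemma b_inf_mult_norm_T_le_zonoid_support:
  "b_inf * norm (T c u) / sqrt (2 * pi) \<le> zonoid_support c u"
proof -
  have "sqrt (2 / pi) / 2 * (b_inf * norm (T c u)) \<le> zonoid_support c u"
    using b_inf_mult_norm_T_le_mean_abs_normal[of c u] by (simp add: zonoid_support_eq_mean_abs_normal)
  then show ?thesis
    by (simp only: sqrt_2_div_pi_div_2_mult)
qed

lemma scaled_T_ball_subset_G: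
  "(\<lambda>x. b_inf *\<^sub>R x) ` (T c ` ((\<lambda>x. (1 / sqrt (2*pi)) *\<^sub>R x) ` cball 0 1)) \<subseteq> G c"
proof clarify
  fix y :: 'a
  assume "y \<in> cball 0 1"
  then have "norm y \<le> 1"
    by simp
  have "u \<bullet> (b_inf *\<^sub>R T c ((1 / sqrt (2*pi)) *\<^sub>R y)) \<le> zonoid_support c u" for u
  proof -
    have "u \<bullet> (b_inf *\<^sub>R T c ((1 / sqrt (2*pi)) *\<^sub>R y)) = b_inf / sqrt (2*pi) * (T c u \<bullet> y)"
      by (simp add: linear_scale[OF linear_T] inner_T_commute)
    also have "\<dots> \<le> b_inf / sqrt (2*pi) * norm (T c u)"
      using norm_cauchy_schwarz[of "T c u" y] mult_left_mono[OF \<open>norm y \<le> 1\<close>, of "norm (T c u)"]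
      by (intro mult_left_mono) (simp_all add: b_inf_nonneg)
    also have "\<dots> \<le> zonoid_support c u"
      using b_inf_mult_norm_T_le_zonoid_support[of c u] by simp
    finally show ?thesis .
  qed
  then show "b_inf *\<^sub>R T c ((1 / sqrt (2*pi)) *\<^sub>R y) \<in> G c"
    by (simp add: G_def)
qed

lemma G_subset_T_ball: "G c \<subseteq> T c ` ((\<lambda>x. (1 / sqrt (2*pi)) *\<^sub>R x) ` cball 0 1)"
proof
  fix x
  assume "x \<in> G c"
  obtain z where z: "x = T c z"
    using surj_T by (rule surjE)
  obtain u where u: "z = T c u"
    using surj_T by (rule surjE)
  have "norm z * norm z = z \<bullet> z"
    by (simp only: power2_norm_eq_inner[symmetric] power2_eq_square)
  also have "\<dots> = u \<bullet> x"
    unfolding z u by (rule inner_T_commute[symmetric])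
  also have "\<dots> \<le> zonoid_support c u"
    using \<open>x \<in> G c\<close> by (simp add: G_def)
  also have "\<dots> \<le> norm z / sqrt (2*pi)"
    using zonoid_support_le_norm_T[of c u] by (simp only: u)
  finally have "norm z * norm z \<le> norm z * (1 / sqrt (2*pi))"
    by simp
  then have "norm z \<le> 1 / sqrt (2*pi)"
    using mult_le_cancel_left_pos[of "norm z" "norm z" "1 / sqrt (2*pi)"] by (cases "z = 0") simp_all
  then have "sqrt (2*pi) *\<^sub>R z \<in> cball 0 1"
    by (simp add: pos_le_divide_eq mult.commute)
  moreover have "x = T c ((1 / sqrt (2*pi)) *\<^sub>R (sqrt (2*pi) *\<^sub>R z))"
    by (simp add: z)
  ultimately show "x \<in> T c ` ((\<lambda>x. (1 / sqrt (2*pi)) *\<^sub>R x) ` cball 0 1)"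
    by blast
qed

theorem theorem2p10:
  fixes c :: "'a::euclidean_space"
  shows "(\<lambda>x. b_inf *\<^sub>R x) ` (T c ` ((\<lambda>x. (1 / sqrt (2*pi)) *\<^sub>R x) ` cball 0 1)) \<subseteq> G c
     \<and> G c \<subseteq> T c ` ((\<lambda>x. (1 / sqrt (2*pi)) *\<^sub>R x) ` cball 0 1)"
  by (intro conjI scaled_T_ball_subset_G G_subset_T_ball)

end
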